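(* Counting with multiplicity, the reverse characteristic polynomial $\psi(z)$ has exactly $k_p-I(\mu\ge0)$ nonzero roots with absolute value strictly less than $1$, exactly $k_q-I(\mu\le0)$ roots with absolute value strictly greater than $1$, and exactly $I(\mu=0)$ roots with absolute value equal to $1$ (where $I(\cdot)$ is the indicator function).
   Context: Fix an integer $k\ge1$ and nonnegative reals $p_1,\dots,p_k,q_1,\dots,q_k$ with $\sum_{j=1}^k(p_j+q_j)=1$, $\sum_{j=1}^k p_j>0$, $\sum_{j=1}^k q_j>0$, and such that $\gcd\{j: p_j+q_j>0\}=1$. Let $k_p=\max\{j:p_j>0\}$, $k_q=\max\{j:q_j>0\}$, and $\mu=\sum_{j=1}^k j(p_j-q_j)$. The reverse characteristic polynomial is $\psi(z)=\sum_{j=0}^{2k-1}\gamma_jz^j$ where $\gamma_j=-\sum_{\ell=k-j}^k p_\ell$ for $0\le j\le k-1$ and $\gamma_j=\sum_{\ell=j-k+1}^k q_\ell$ for $k\le j\le 2k-1$. *)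

theory Defs
  imports "HOL-Analysis.Analysis" "HOL-Computational_Algebra.Polynomial"
begin

text \<open>Coefficients gamma_j of the reverse characteristic polynomial; p, q are indexed 1..k.\<close>
definition rc_gamma :: "nat \<Rightarrow> (nat \<Rightarrow> real) \<Rightarrow> (nat \<Rightarrow> real) \<Rightarrow> nat \<Rightarrow> real" where
  "rc_gamma k p q j =
     (if j < k then - (\<Sum>l = k - j..k. p l)
      else if j \<le> 2 * k - 1 then (\<Sum>l = j - k + 1..k. q l) else 0)"

definition rc_psi :: "nat \<Rightarrow> (nat \<Rightarrow> real) \<Rightarrow> (nat \<Rightarrow> real) \<Rightarrow> complex poly" where
  "rc_psi k p q = (\<Sum>j<2 * k. monom (complex_of_real (rc_gamma k p q j)) j)"

definition roots_in :: "complex poly \<Rightarrow> complex set \<Rightarrow> nat" where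
  "roots_in f S = (\<Sum>z\<in>{z. poly f z = 0 \<and> z \<in> S}. order z f)"

end

theory Submission
  imports Defs "HOL-Complex_Analysis.Complex_Analysis" "HOL-Computational_Algebra.Fundamental_Theorem_Algebra"
begin

(*
  For z \<noteq> 0 put Phi(z) = \<Sum>_l (p_l z^-l + q_l z^l) and G(z) = z^kp (Phi(z) - 1), a polynomial of
  degree kp + kq with G(0) = p_kp \<noteq> 0. The partial sums gamma_j telescope:
  (z - 1) psi(z) = z^(k - kp) G(z), so away from 0 and 1 the roots of psi are those of G.

  On the unit circle z^-l is the conjugate of z^l, so Phi(z) = 1 forces Re z^l = 1 for every l in
  the support of p + q, and the gcd condition leaves z = 1. Its multiplicity is 1, or 2 when
  G'(1) = -mu vanishes. Inside, Rouche's theorem against the term c z^kp shows that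
  z^kp (Phi(z) - c) has exactly kp roots in |z| < rho whenever Phi(rho) < c. If mu \<noteq> 0, then Phi
  drops below 1 just inside (mu < 0) or just outside (mu > 0) the unit circle, which gives the
  count. If mu = 0, then Phi > 1 on both sides of 1 by convexity, and a level c slightly above 1
  splits the double root of G at 1 into one real root on each side of the circle while the counts
  on nearby circles stay fixed. The roots outside the circle are what the degree leaves over.
*)

lemma pow_Gcd_eq_1:
  fixes z :: "'a :: monoid_mult"
  assumes "finite A" and "\<And>l. l \<in> A \<Longrightarrow> z ^ l = 1"
  shows "z ^ Gcd A = 1"
  using assms
proof (induction A rule: finite_induct)
  case (insert a A)
  then have "z ^ a = 1" "z ^ Gcd A = 1" by auto
  show ?case
  proof (cases "a = 0")
    case False
    then obtain x y where xy: "a * x = Gcd A * y + gcd a (Gcd A)"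
      using bezout_nat by blast
    have "1 = z ^ (a * x)" using \<open>z ^ a = 1\<close> by (simp add: power_mult)
    also have "\<dots> = z ^ gcd a (Gcd A)"
      using \<open>z ^ Gcd A = 1\<close> by (simp add: xy power_add power_mult)
    finally show ?thesis by simp
  qed (use \<open>z ^ Gcd A = 1\<close> in simp)
qed simp

lemma unimodular_Re_eq_1:
  fixes w :: complex
  assumes "cmod w = 1" "Re w = 1"
  shows "w = 1"
proof -
  have "(Re w)\<^sup>2 + (Im w)\<^sup>2 = 1" using cmod_power2[of w] assms(1) by simp
  then have "Im w = 0" using assms(2) by simp
  then show ?thesis using assms(2) by (simp add: complex_eq_iff)
qed

lemma poly_eqI_nonzero:
  fixes f g :: "complex poly"
  assumes "\<And>z. z \<noteq> 0 \<Longrightarrow> poly f z = poly g z"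
  shows "f = g"
proof (rule ccontr)
  assume "f \<noteq> g"
  then have "finite {z. poly (f - g) z = 0}" by (intro poly_roots_finite) simp
  then have "finite (insert 0 {z. poly (f - g) z = 0})" by simp
  moreover have "UNIV \<subseteq> insert 0 {z. poly (f - g) z = 0}" using assms by auto
  ultimately have "finite (UNIV :: complex set)" by (rule finite_subset[rotated])
  then show False using infinite_UNIV_char_0 by blast
qed

lemma pderiv_sum: "pderiv (sum f A) = (\<Sum>x\<in>A. pderiv (f x))"
  using higher_pderiv_sum[of 1 f A] by simp

lemma poly_pderiv_monom_1: "poly (pderiv (monom a n)) 1 = of_nat n * a"
  by (simp add: pderiv_monom poly_monom)

lemma poly_pderiv2_monom_1:
  "poly (pderiv (pderiv (monom (a :: 'a :: idom) n))) 1
     = of_nat n * (of_nat n - 1) * a"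
  by (cases n) (simp_all add: pderiv_monom poly_monom algebra_simps)

lemma Max_support:
  fixes f :: "nat \<Rightarrow> real"
  assumes nonneg: "\<And>j. j \<in> {1..k} \<Longrightarrow> f j \<ge> 0" and "(\<Sum>j = 1..k. f j) > 0"
  defines "m \<equiv> Max {j \<in> {1..k}. f j > 0}"
  shows "m \<in> {1..k}" "f m > 0" "\<And>j. j \<in> {1..k} \<Longrightarrow> m < j \<Longrightarrow> f j = 0"
proof -
  have "{j \<in> {1..k}. f j > 0} \<noteq> {}"
  proof
    assume "{j \<in> {1..k}. f j > 0} = {}"
    then have "(\<Sum>j = 1..k. f j) = 0" using nonneg by (intro sum.neutral) force
    then show False using assms(2) by simp
  qed
  then have "m \<in> {j \<in> {1..k}. f j > 0}" unfolding m_def by (intro Max_in) simp_all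
  then show "m \<in> {1..k}" "f m > 0" by auto
  fix j assume j: "j \<in> {1..k}" "m < j"
  show "f j = 0"
  proof (rule ccontr)
    assume "f j \<noteq> 0"
    then have "j \<le> m" unfolding m_def using j(1) nonneg[OF j(1)] by (intro Max_ge) auto
    then show False using j(2) by simp
  qed
qed

lemma coeff_rc_psi: "coeff (rc_psi k p q) j = of_real (rc_gamma k p q j)"
  by (cases "j < 2 * k") (auto simp: rc_psi_def rc_gamma_def coeff_sum)

section \<open>Counting roots in a region\<close>

lemma roots_in_cong:
  "(\<And>z. poly f z = 0 \<Longrightarrow> z \<in> A \<longleftrightarrow> z \<in> B) \<Longrightarrow> roots_in f A = roots_in f B"
  unfolding roots_in_def by (rule sum.cong) auto

lemma roots_in_cong_order:
  fixes f g :: "complex poly"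
  assumes "f \<noteq> 0" "g \<noteq> 0" and "\<And>z. z \<in> S \<Longrightarrow> order z f = order z g"
  shows "roots_in f S = roots_in g S"
proof -
  have "{z. poly f z = 0 \<and> z \<in> S} = {z. poly g z = 0 \<and> z \<in> S}"
    using assms by (auto simp: order_root)
  then show ?thesis
    unfolding roots_in_def using assms(3) by (auto intro: sum.cong)
qed

lemma roots_in_Un:
  fixes f :: "complex poly"
  assumes "f \<noteq> 0" "A \<inter> B = {}"
  shows "roots_in f (A \<union> B) = roots_in f A + roots_in f B"
proof -
  have fin: "finite {z. poly f z = 0}" using poly_roots_finite[OF assms(1)] .
  have "{z. poly f z = 0 \<and> z \<in> A \<union> B} = {z. poly f z = 0 \<and> z \<in> A} \<union> {z. poly f z = 0 \<and> z \<in> B}"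
    by auto
  then show ?thesis
    unfolding roots_in_def using assms(2)
    by (simp only:) (rule sum.union_disjoint; auto intro: finite_subset[OF _ fin])
qed

lemma roots_in_mono:
  fixes f :: "complex poly"
  assumes "f \<noteq> 0" "A \<subseteq> B"
  shows "roots_in f A \<le> roots_in f B"
  unfolding roots_in_def using assms poly_roots_finite[OF assms(1)]
  by (intro sum_mono2) (auto intro: finite_subset)

lemma roots_in_singleton:
  fixes f :: "complex poly"
  shows "roots_in f {a} = order a f"
proof (cases "poly f a = 0")
  case True
  then have "{z. poly f z = 0 \<and> z \<in> {a}} = {a}" by auto
  then show ?thesis unfolding roots_in_def by simp
next
  case False
  then have "{z. poly f z = 0 \<and> z \<in> {a}} = {}" by auto
  then show ?thesis unfolding roots_in_def using order_0I[OF False] by simp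
qed

lemma roots_in_UNIV:
  fixes f :: "complex poly"
  assumes "f \<noteq> 0"
  shows "roots_in f UNIV = degree f"
proof -
  have "degree f = size (proots f)" by (simp add: size_proots_complex)
  also have "\<dots> = (\<Sum>z\<in>set_mset (proots f). count (proots f) z)"
    by (simp add: size_multiset_overloaded_eq)
  finally show ?thesis unfolding roots_in_def using assms by simp
qed

lemma roots_in_less_insert_root:
  fixes f :: "complex poly"
  assumes "f \<noteq> 0" "poly f a = 0" "a \<notin> S" "insert a S \<subseteq> T"
  shows "roots_in f S < roots_in f T"
proof -
  have "roots_in f S < roots_in f S + roots_in f {a}"
    using assms(1,2) by (simp add: roots_in_singleton order_root)
  also have "\<dots> = roots_in f (S \<union> {a})"
    using assms(3) roots_in_Un[OF assms(1), of S "{a}"] by simp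
  also have "\<dots> \<le> roots_in f T"
    using assms(4) by (intro roots_in_mono[OF assms(1)]) auto
  finally show ?thesis .
qed

lemma unit_circle_root_gap:
  fixes f :: "complex poly"
  assumes "f \<noteq> 0"
  obtains \<delta> where "0 < \<delta>" "\<delta> < 1"
    and "\<And>z. poly f z = 0 \<Longrightarrow> cmod z \<noteq> 1 \<Longrightarrow> \<delta> < \<bar>cmod z - 1\<bar>"
proof -
  define R where "R = {z. poly f z = 0 \<and> cmod z \<noteq> 1}"
  have "finite R"
    unfolding R_def using poly_roots_finite[OF assms] by (rule finite_subset[rotated]) auto
  define m where "m = Min (insert 1 ((\<lambda>z. \<bar>cmod z - 1\<bar>) ` R))"
  have "0 < m" unfolding m_def using \<open>finite R\<close> by (subst Min_gr_iff) (auto simp: R_def)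
  have "m \<le> 1" unfolding m_def using \<open>finite R\<close> by (intro Min_le) auto
  show ?thesis
  proof (rule that[of "m / 2"])
    fix z assume "poly f z = 0" "cmod z \<noteq> 1"
    then have "m \<le> \<bar>cmod z - 1\<bar>"
      unfolding m_def using \<open>finite R\<close> by (intro Min_le) (auto simp: R_def)
    then show "m / 2 < \<bar>cmod z - 1\<bar>" using \<open>0 < m\<close> by simp
  qed (use \<open>0 < m\<close> \<open>m \<le> 1\<close> in auto)
qed

lemma roots_in_disc_below_gap:
  assumes gap: "\<And>z. poly f z = 0 \<Longrightarrow> cmod z \<noteq> 1 \<Longrightarrow> \<delta> < \<bar>cmod z - 1\<bar>"
    and "0 < h" "h \<le> \<delta>"
  shows "roots_in f {z. cmod z < 1 - h} = roots_in f {z. cmod z < 1}"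
  using gap assms(2,3) by (intro roots_in_cong) force

lemma roots_in_disc_above_gap:
  assumes "f \<noteq> 0"
    and gap: "\<And>z. poly f z = 0 \<Longrightarrow> cmod z \<noteq> 1 \<Longrightarrow> \<delta> < \<bar>cmod z - 1\<bar>"
    and "0 < h" "h \<le> \<delta>"
  shows "roots_in f {z. cmod z < 1 + h} = roots_in f {z. cmod z < 1} + roots_in f {z. cmod z = 1}"
proof -
  have "roots_in f {z. cmod z < 1 + h} = roots_in f ({z. cmod z < 1} \<union> {z. cmod z = 1})"
    using gap assms(3,4) by (intro roots_in_cong) force
  also have "\<dots> = roots_in f {z. cmod z < 1} + roots_in f {z. cmod z = 1}"
    by (rule roots_in_Un[OF assms(1)]) auto
  finally show ?thesis .
qed

section \<open>Rouche's theorem for polynomials\<close>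

lemma zorder_poly:
  fixes f :: "complex poly"
  assumes "f \<noteq> 0"
  shows "zorder (poly f) a = int (order a f)"
proof -
  obtain g where g: "f = [:- a, 1:] ^ order a f * g" and "\<not> [:- a, 1:] dvd g"
    using order_decomp[OF assms] by blast
  then have "poly g a \<noteq> 0" by (simp add: poly_eq_0_iff_dvd)
  show ?thesis
  proof (rule zorder_eqI[where S = UNIV and g = "poly g"])
    fix w :: complex
    show "poly f w = poly g w * (w - a) powi int (order a f)"
      by (subst g) (simp add: power_int_of_nat mult.commute)
  qed (use \<open>poly g a \<noteq> 0\<close> in \<open>auto intro!: holomorphic_intros\<close>)
qed

lemma winding_sum_circlepath_poly:
  fixes f :: "complex poly"
  assumes "f \<noteq> 0" "0 < \<rho>" and "\<And>z. cmod z = \<rho> \<Longrightarrow> poly f z \<noteq> 0"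
  shows "(\<Sum>w\<in>{w. poly f w = 0}. winding_number (circlepath 0 \<rho>) w * zorder (poly f) w)
       = of_nat (roots_in f {z. cmod z < \<rho>})"
proof -
  have "winding_number (circlepath 0 \<rho>) w * zorder (poly f) w
      = (if cmod w < \<rho> then of_nat (order w f) else 0)" if "poly f w = 0" for w
  proof (cases "cmod w < \<rho>")
    case True
    then have "winding_number (circlepath 0 \<rho>) w = 1"
      by (intro winding_number_circlepath) simp
    then show ?thesis using True zorder_poly[OF assms(1)] by simp
  next
    case False
    moreover have "cmod w \<noteq> \<rho>" using assms(3) that by blast
    ultimately have "\<rho> < cmod w" by simp
    then have "winding_number (circlepath 0 \<rho>) w = 0"
      by (intro winding_number_zero_outside[where s = "cball 0 \<rho>"]) (use assms(2) in auto)
    then show ?thesis using False by simp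
  qed
  then have "(\<Sum>w\<in>{w. poly f w = 0}. winding_number (circlepath 0 \<rho>) w * zorder (poly f) w)
      = (\<Sum>w\<in>{w. poly f w = 0}. if cmod w < \<rho> then of_nat (order w f) else 0)"
    by (intro sum.cong) auto
  also have "\<dots> = (\<Sum>w\<in>{w. poly f w = 0 \<and> w \<in> {z. cmod z < \<rho>}}. of_nat (order w f))"
    using sum.inter_filter[OF poly_roots_finite[OF assms(1)],
        of "\<lambda>w. of_nat (order w f) :: complex" "\<lambda>w. cmod w < \<rho>"]
    by (simp add: conj_commute)
  finally show ?thesis unfolding roots_in_def by simp
qed

lemma roots_in_disc_add_dominated:
  fixes f g :: "complex poly"
  assumes "0 < \<rho>" and dominated: "\<And>z. cmod z = \<rho> \<Longrightarrow> cmod (poly g z) < cmod (poly f z)"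
  shows "roots_in (f + g) {z. cmod z < \<rho>} = roots_in f {z. cmod z < \<rho>}"
proof -
  have f_circle: "poly f z \<noteq> 0" if "cmod z = \<rho>" for z
    using dominated[OF that] by auto
  have fg_circle: "poly (f + g) z \<noteq> 0" if "cmod z = \<rho>" for z
    using dominated[OF that] by (auto simp: add_eq_0_iff)
  have "cmod (of_real \<rho> :: complex) = \<rho>" using assms(1) by simp
  then have "f \<noteq> 0" "f + g \<noteq> 0"
    using f_circle fg_circle by (metis poly_0)+
  have "(\<Sum>w\<in>{w\<in>UNIV. poly f w + poly g w = 0}.
            winding_number (circlepath 0 \<rho>) w * zorder (\<lambda>w. poly f w + poly g w) w)
      = (\<Sum>w\<in>{w\<in>UNIV. poly f w = 0}. winding_number (circlepath 0 \<rho>) w * zorder (poly f) w)"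
  proof (rule Rouche_theorem)
    show "finite {w \<in> UNIV. poly f w + poly g w = 0}"
      using poly_roots_finite[OF \<open>f + g \<noteq> 0\<close>] by simp
    show "finite {w \<in> UNIV. poly f w = 0}"
      using poly_roots_finite[OF \<open>f \<noteq> 0\<close>] by simp
    show "\<forall>z\<in>path_image (circlepath 0 \<rho>). cmod (poly g z) < cmod (poly f z)"
      using dominated assms(1) by (auto simp: sphere_def)
  qed (auto intro!: holomorphic_intros)
  then have "(of_nat (roots_in (f + g) {z. cmod z < \<rho>}) :: complex) = of_nat (roots_in f {z. cmod z < \<rho>})"
    using winding_sum_circlepath_poly[OF \<open>f + g \<noteq> 0\<close> assms(1) fg_circle]
      winding_sum_circlepath_poly[OF \<open>f \<noteq> 0\<close> assms(1) f_circle]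
    by (simp add: poly_add[abs_def])
  then show ?thesis by (simp only: of_nat_eq_iff)
qed

lemma roots_in_disc_perturb:
  fixes f :: "complex poly"
  assumes "0 < \<rho>" and "\<And>z. cmod z = \<rho> \<Longrightarrow> poly f z \<noteq> 0"
  obtains \<epsilon> where "0 < \<epsilon>"
    and "\<And>g. (\<And>z. cmod z = \<rho> \<Longrightarrow> cmod (poly g z) < \<epsilon>) \<Longrightarrow>
           roots_in (f + g) {z. cmod z < \<rho>} = roots_in f {z. cmod z < \<rho>}"
proof -
  have "\<exists>z0\<in>sphere 0 \<rho>. \<forall>z\<in>sphere 0 \<rho>. cmod (poly f z0) \<le> cmod (poly f z)"
    by (rule continuous_attains_inf) (use assms(1) in \<open>auto intro!: continuous_intros\<close>)
  then obtain z0 where "cmod z0 = \<rho>"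
    and min: "\<And>z. cmod z = \<rho> \<Longrightarrow> cmod (poly f z0) \<le> cmod (poly f z)"
    by auto
  show ?thesis
  proof (rule that)
    show "0 < cmod (poly f z0)" using assms(2)[OF \<open>cmod z0 = \<rho>\<close>] by simp
    fix g assume "\<And>z. cmod z = \<rho> \<Longrightarrow> cmod (poly g z) < cmod (poly f z0)"
    then show "roots_in (f + g) {z. cmod z < \<rho>} = roots_in f {z. cmod z < \<rho>}"
      using min by (intro roots_in_disc_add_dominated[OF assms(1)]) (blast intro: order_less_le_trans)
  qed
qed

locale bounded_jump_walk =
  fixes k :: nat and p q :: "nat \<Rightarrow> real"
  assumes k_ge_1: "k \<ge> 1"
    and p_nonneg: "\<And>j. j \<in> {1..k} \<Longrightarrow> p j \<ge> 0"
    and q_nonneg: "\<And>j. j \<in> {1..k} \<Longrightarrow> q j \<ge> 0"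
    and sum_p_q: "(\<Sum>j = 1..k. p j + q j) = 1"
    and sum_p_pos: "(\<Sum>j = 1..k. p j) > 0"
    and sum_q_pos: "(\<Sum>j = 1..k. q j) > 0"
    and Gcd_support: "Gcd {j \<in> {1..k}. p j + q j > 0} = 1"
begin

definition kp :: nat where "kp = Max {j \<in> {1..k}. p j > 0}"
definition kq :: nat where "kq = Max {j \<in> {1..k}. q j > 0}"
definition mu :: real where "mu = (\<Sum>j = 1..k. real j * (p j - q j))"

lemma kp_mem: "kp \<in> {1..k}" and p_kp_pos: "p kp > 0"
  and p_above_kp: "l \<in> {1..k} \<Longrightarrow> kp < l \<Longrightarrow> p l = 0"
  using Max_support[of k p] p_nonneg sum_p_pos unfolding kp_def by blast+

lemma kq_mem: "kq \<in> {1..k}" and q_kq_pos: "q kq > 0"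
  and q_above_kq: "l \<in> {1..k} \<Longrightarrow> kq < l \<Longrightarrow> q l = 0"
  using Max_support[of k q] q_nonneg sum_q_pos unfolding kq_def by blast+

(* Defined over any real normed field: the reals carry the monotonicity and convexity
   arguments, the complex numbers the root counting. *)
definition step_gf :: "'a :: real_normed_field \<Rightarrow> 'a" where
  "step_gf z = (\<Sum>l = 1..k. of_real (p l) / z ^ l + of_real (q l) * z ^ l)"

lemma step_gf_real: "step_gf x = (\<Sum>l = 1..k. p l / x ^ l + q l * x ^ l)" for x :: real
  by (simp add: step_gf_def)

lemma step_gf_of_real: "step_gf (of_real x :: 'a :: real_normed_field) = of_real (step_gf x)"
  by (simp add: step_gf_def)

lemma step_gf_1 [simp]: "step_gf (1 :: 'a :: real_normed_field) = 1"
  using sum_p_q by (simp add: step_gf_def flip: of_real_add of_real_sum)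

lemma norm_step_gf_le: "norm (step_gf z) \<le> step_gf (norm z)"
proof -
  have "norm (step_gf z) \<le> (\<Sum>l = 1..k. norm (of_real (p l) / z ^ l + of_real (q l) * z ^ l))"
    unfolding step_gf_def by (rule norm_sum)
  also have "\<dots> \<le> (\<Sum>l = 1..k. p l / norm z ^ l + q l * norm z ^ l)"
    using p_nonneg q_nonneg
    by (intro sum_mono order.trans[OF norm_triangle_ineq])
       (simp add: norm_divide norm_mult norm_power)
  finally show ?thesis by (simp add: step_gf_def)
qed

lemma Re_step_gf_unimodular:
  assumes "cmod z = 1"
  shows "Re (step_gf z) = (\<Sum>l = 1..k. (p l + q l) * Re (z ^ l))"
proof -
  have "cmod (z ^ l) = 1" for l using assms by (simp add: norm_power)
  then show ?thesis
    unfolding step_gf_def by (simp add: Re_sum divide_conv_cnj algebra_simps flip: complex_cnj_power)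
qed

lemma step_gf_above_tangent:
  fixes x :: real
  assumes "x > 0" "x \<noteq> 1"
  shows "step_gf x - 1 > - mu * (x - 1)"
proof -
  define D where "D l = p l * (1 / x ^ l - 1 - real l * (1 - x)) + q l * (x ^ l - 1 - real l * (x - 1))" for l
  have "1 / x - 1 - (1 - x) = (x - 1)\<^sup>2 / x"
    using assms by (simp add: field_simps power2_eq_square)
  moreover have "(x - 1)\<^sup>2 / x > 0" using assms by simp
  ultimately have "1 - x < 1 / x - 1" by linarith
  have D_nonneg: "D l \<ge> 0" and D_pos: "p l > 0 \<Longrightarrow> D l > 0" if l: "l \<in> {1..k}" for l
  proof -
    have "1 + real l * (x - 1) \<le> x ^ l"
      using Bernoulli_inequality[of "x - 1" l] assms by simp
    moreover have "1 + real l * (1 / x - 1) \<le> 1 / x ^ l"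
      using Bernoulli_inequality[of "1 / x - 1" l] assms by (simp add: power_one_over)
    moreover have "real l * (1 - x) < real l * (1 / x - 1)"
      using \<open>1 - x < 1 / x - 1\<close> l by simp
    ultimately have "1 / x ^ l - 1 - real l * (1 - x) > 0" "x ^ l - 1 - real l * (x - 1) \<ge> 0"
      by simp_all
    then show "D l \<ge> 0" "p l > 0 \<Longrightarrow> D l > 0"
      unfolding D_def using p_nonneg[OF l] q_nonneg[OF l] by (simp_all add: add_pos_nonneg)
  qed
  have "(\<Sum>l = 1..k. D l) > 0"
    using kp_mem p_kp_pos D_nonneg D_pos by (intro sum_pos2[of _ kp]) auto
  moreover have "(\<Sum>l = 1..k. D l) = step_gf x - (\<Sum>l = 1..k. p l + q l) + mu * (x - 1)"
    unfolding D_def step_gf_real mu_def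
    by (simp add: sum.distrib sum_subtractf sum_distrib_left sum_distrib_right algebra_simps)
  ultimately show ?thesis using sum_p_q by simp
qed

lemma step_gf_has_derivative_1: "(step_gf has_real_derivative - mu) (at 1)"
proof -
  have "(step_gf has_real_derivative (\<Sum>l = 1..k. real l * q l - p l * real l)) (at 1)"
    unfolding step_gf_real[abs_def] by (rule derivative_eq_intros refl | simp)+
  moreover have "(\<Sum>l = 1..k. real l * q l - p l * real l) = - mu"
    unfolding mu_def by (simp add: algebra_simps sum_subtractf sum_negf)
  ultimately show ?thesis by simp
qed

(* The truncated exponent m - l is harmless: m \<ge> kp throughout and p l = 0 for l > kp. *)
definition step_poly :: "nat \<Rightarrow> real \<Rightarrow> complex poly" where
  "step_poly m c = (\<Sum>l = 1..k. monom (of_real (p l)) (m - l))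
     + (\<Sum>l = 1..k. monom (of_real (q l)) (m + l)) - monom (of_real c) m"

lemma poly_step_poly:
  assumes "kp \<le> m" "z \<noteq> 0"
  shows "poly (step_poly m c) z = z ^ m * (step_gf z - of_real c)"
proof -
  have "of_real (p l) * z ^ (m - l) = z ^ m * (of_real (p l) / z ^ l)" if "l \<in> {1..k}" for l
  proof (cases "l \<le> m")
    case True
    then show ?thesis using assms(2) by (simp add: power_diff)
  next
    case False
    then show ?thesis using p_above_kp[OF that] assms(1) by simp
  qed
  then have "(\<Sum>l = 1..k. of_real (p l) * z ^ (m - l)) = (\<Sum>l = 1..k. z ^ m * (of_real (p l) / z ^ l))"
    by (rule sum.cong[OF refl])
  moreover have "(\<Sum>l = 1..k. of_real (q l) * z ^ (m + l)) = (\<Sum>l = 1..k. z ^ m * (of_real (q l) * z ^ l))"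
    by (simp add: power_add mult.left_commute)
  ultimately show ?thesis
    by (simp add: step_poly_def step_gf_def poly_sum poly_monom sum.distrib sum_distrib_left algebra_simps)
qed

lemma poly_step_poly_of_real:
  assumes "kp \<le> m" "0 < x"
  shows "poly (step_poly m c) (of_real x) = of_real (x ^ m * (step_gf x - c))"
  using assms by (simp add: poly_step_poly step_gf_of_real)

lemma step_poly_shift: "step_poly m c = step_poly m 1 + monom (of_real (1 - c)) m"
proof -
  have "monom 1 m = monom (of_real c) m + monom (of_real (1 - c)) m"
    by (simp add: add_monom)
  then show ?thesis by (simp add: step_poly_def algebra_simps)
qed

lemma poly_step_poly_0: "poly (step_poly kp c) 0 = of_real (p kp)"
proof -
  have "of_real (p l) * (0::complex) ^ (kp - l) = (if l = kp then of_real (p l) else 0)"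
    if "l \<in> {1..k}" for l
    using p_above_kp[OF that] by (cases "l < kp") auto
  then have "(\<Sum>l = 1..k. of_real (p l) * (0::complex) ^ (kp - l))
      = (\<Sum>l = 1..k. if l = kp then of_real (p l) else 0)"
    by (rule sum.cong[OF refl])
  then show ?thesis using kp_mem by (simp add: step_poly_def poly_sum poly_monom power_0_left)
qed

lemma step_poly_nonzero: "step_poly kp c \<noteq> 0"
proof
  assume "step_poly kp c = 0"
  then have "p kp = 0" using poly_step_poly_0[of c] by simp
  then show False using p_kp_pos by simp
qed

lemma coeff_step_poly_above:
  assumes "m < n"
  shows "coeff (step_poly m c) n = (if n - m \<in> {1..k} then of_real (q (n - m)) else 0)"
proof -
  have "(\<Sum>l = 1..k. coeff (monom (of_real (p l) :: complex) (m - l)) n) = 0"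
    using assms by (intro sum.neutral) (auto simp: coeff_monom)
  moreover have "(\<Sum>l = 1..k. coeff (monom (of_real (q l) :: complex) (m + l)) n)
      = (\<Sum>l = 1..k. if l = n - m then of_real (q l) else 0)"
    using assms by (intro sum.cong) (auto simp: coeff_monom)
  moreover have "coeff (monom (of_real c :: complex) m) n = 0" using assms by simp
  ultimately show ?thesis
    by (simp add: step_poly_def coeff_sum del: coeff_monom)
qed

lemma degree_step_poly: "degree (step_poly kp c) = kp + kq"
proof (rule antisym)
  show "degree (step_poly kp c) \<le> kp + kq"
    by (rule degree_le) (use q_above_kq in \<open>auto simp: coeff_step_poly_above\<close>)
  have "coeff (step_poly kp c) (kp + kq) \<noteq> 0"
    using kq_mem q_kq_pos by (simp add: coeff_step_poly_above)
  then show "kp + kq \<le> degree (step_poly kp c)" by (rule le_degree)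
qed

section \<open>Locating the roots of step_poly\<close>

lemma roots_in_step_poly_disc:
  assumes "0 < \<rho>" and "step_gf \<rho> < c"
  shows "roots_in (step_poly kp c) {z. cmod z < \<rho>} = kp"
proof -
  have "0 \<le> step_gf \<rho>" using order_trans[OF norm_ge_zero norm_step_gf_le[of \<rho>]] assms(1) by simp
  then have "0 < c" using assms(2) by simp
  define P where "P = monom (- of_real c :: complex) kp"
  define S where "S = step_poly kp c - P"
  have "roots_in (P + S) {z. cmod z < \<rho>} = roots_in P {z. cmod z < \<rho>}"
  proof (rule roots_in_disc_add_dominated[OF assms(1)])
    fix z :: complex assume z: "cmod z = \<rho>"
    then have "z \<noteq> 0" using assms(1) by auto
    then have "poly S z = z ^ kp * step_gf z"
      by (simp add: S_def P_def poly_step_poly poly_monom algebra_simps)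
    then have "cmod (poly S z) = \<rho> ^ kp * cmod (step_gf z)"
      using z by (simp add: norm_mult norm_power)
    also have "\<dots> \<le> \<rho> ^ kp * step_gf \<rho>"
      using norm_step_gf_le[of z] z assms(1) by (simp add: mult_left_mono)
    also have "\<dots> < \<rho> ^ kp * c" using assms by simp
    also have "\<dots> = cmod (poly P z)"
      using z \<open>0 < c\<close> by (simp add: P_def poly_monom norm_mult norm_power)
    finally show "cmod (poly S z) < cmod (poly P z)" .
  qed
  also have "roots_in P {z. cmod z < \<rho>} = roots_in P {0}"
    using \<open>0 < c\<close> assms(1) by (intro roots_in_cong) (auto simp: P_def poly_monom)
  also have "\<dots> = kp"
    using \<open>0 < c\<close> by (simp add: roots_in_singleton P_def)
  finally show ?thesis by (simp add: S_def)
qed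

lemma roots_in_step_poly_stable:
  assumes "0 < \<rho>" and "\<And>z. cmod z = \<rho> \<Longrightarrow> poly (step_poly kp 1) z \<noteq> 0"
  obtains \<epsilon> where "0 < \<epsilon>"
    and "\<And>c. \<bar>c - 1\<bar> < \<epsilon> \<Longrightarrow>
           roots_in (step_poly kp c) {z. cmod z < \<rho>} = roots_in (step_poly kp 1) {z. cmod z < \<rho>}"
proof -
  obtain \<epsilon> where "0 < \<epsilon>" and perturb: "\<And>g. (\<And>z. cmod z = \<rho> \<Longrightarrow> cmod (poly g z) < \<epsilon>) \<Longrightarrow>
      roots_in (step_poly kp 1 + g) {z. cmod z < \<rho>} = roots_in (step_poly kp 1) {z. cmod z < \<rho>}"
    using roots_in_disc_perturb[OF assms] by blast
  show ?thesis
  proof (rule that[of "\<epsilon> / \<rho> ^ kp"])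
    show "0 < \<epsilon> / \<rho> ^ kp" using \<open>0 < \<epsilon>\<close> assms(1) by simp
    fix c assume c: "\<bar>c - 1\<bar> < \<epsilon> / \<rho> ^ kp"
    have "cmod (poly (monom (of_real (1 - c)) kp) z) < \<epsilon>" if "cmod z = \<rho>" for z
    proof -
      have "cmod (poly (monom (of_real (1 - c)) kp) z) = \<bar>1 - c\<bar> * \<rho> ^ kp"
        using that by (simp only: poly_monom norm_mult norm_of_real norm_power)
      also have "\<dots> < \<epsilon>" using c assms(1) by (simp add: field_simps abs_minus_commute)
      finally show ?thesis .
    qed
    then show "roots_in (step_poly kp c) {z. cmod z < \<rho>} = roots_in (step_poly kp 1) {z. cmod z < \<rho>}"
      using perturb step_poly_shift[of kp c] by simp
  qed
qed

lemma step_poly_root_unimodular: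
  assumes "cmod z = 1" and "poly (step_poly kp 1) z = 0"
  shows "z = 1"
proof -
  have "z \<noteq> 0" using assms(1) by auto
  then have "step_gf z = 1" using assms(2) by (simp add: poly_step_poly)
  then have "(\<Sum>l = 1..k. (p l + q l) * Re (z ^ l)) = (\<Sum>l = 1..k. (p l + q l))"
    using Re_step_gf_unimodular[OF assms(1)] sum_p_q by simp
  then have "(\<Sum>l = 1..k. (p l + q l) * (1 - Re (z ^ l))) = 0"
    by (simp add: algebra_simps sum_subtractf)
  moreover have "(p l + q l) * (1 - Re (z ^ l)) \<ge> 0" if "l \<in> {1..k}" for l
    using complex_Re_le_cmod[of "z ^ l"] assms(1) p_nonneg[OF that] q_nonneg[OF that]
    by (simp add: norm_power)
  ultimately have "\<forall>l\<in>{1..k}. (p l + q l) * (1 - Re (z ^ l)) = 0"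
    by (subst (asm) sum_nonneg_eq_0_iff) auto
  then have "z ^ l = 1" if "l \<in> {j \<in> {1..k}. p j + q j > 0}" for l
    using that assms(1) by (intro unimodular_Re_eq_1) (force simp: norm_power)+
  then have "z ^ Gcd {j \<in> {1..k}. p j + q j > 0} = 1"
    by (intro pow_Gcd_eq_1) auto
  then show ?thesis using Gcd_support by simp
qed

lemma roots_in_step_poly_circle:
  "roots_in (step_poly kp 1) {z. cmod z = 1} = order 1 (step_poly kp 1)"
proof -
  have "roots_in (step_poly kp 1) {z. cmod z = 1} = roots_in (step_poly kp 1) {1}"
    by (intro roots_in_cong) (auto dest: step_poly_root_unimodular)
  then show ?thesis by (simp add: roots_in_singleton)
qed

lemma sum_p_of_nat_diff:
  assumes "kp \<le> m"
  shows "(\<Sum>l = 1..k. f (real (m - l)) * p l) = (\<Sum>l = 1..k. f (real m - real l) * p l)"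
proof (rule sum.cong[OF refl])
  fix l assume "l \<in> {1..k}"
  then show "f (real (m - l)) * p l = f (real m - real l) * p l"
    using p_above_kp[of l] assms by (cases "l \<le> m") (auto simp: of_nat_diff)
qed

lemma poly_step_poly_1: "kp \<le> m \<Longrightarrow> poly (step_poly m 1) 1 = 0"
  by (simp add: poly_step_poly)

lemma poly_pderiv_step_poly_1:
  assumes "kp \<le> m"
  shows "poly (pderiv (step_poly m 1)) 1 = - of_real mu"
proof -
  have "poly (pderiv (step_poly m 1)) 1
      = of_real ((\<Sum>l = 1..k. real (m - l) * p l) + (\<Sum>l = 1..k. real (m + l) * q l) - real m)"
    by (simp add: step_poly_def pderiv_sum pderiv_add pderiv_diff poly_sum poly_pderiv_monom_1
        del: pderiv_monom)
  also have "(\<Sum>l = 1..k. real (m - l) * p l) = (\<Sum>l = 1..k. (real m - real l) * p l)"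
    using sum_p_of_nat_diff[OF assms, of id] by simp
  also have "(\<Sum>l = 1..k. (real m - real l) * p l) + (\<Sum>l = 1..k. real (m + l) * q l) - real m
      = real m * ((\<Sum>l = 1..k. p l + q l) - 1) - mu"
    by (simp add: mu_def algebra_simps sum.distrib sum_subtractf sum_distrib_left)
  also have "\<dots> = - mu" using sum_p_q by simp
  finally show ?thesis by simp
qed

lemma poly_pderiv2_step_poly_1:
  assumes "kp \<le> m"
  shows "poly (pderiv (pderiv (step_poly m 1))) 1
    = of_real ((\<Sum>l = 1..k. (real l)\<^sup>2 * (p l + q l)) + (1 - 2 * real m) * mu)"
proof -
  have "poly (pderiv (pderiv (step_poly m 1))) 1
      = of_real ((\<Sum>l = 1..k. real (m - l) * (real (m - l) - 1) * p l)
          + (\<Sum>l = 1..k. real (m + l) * (real (m + l) - 1) * q l) - real m * (real m - 1))"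
    by (simp add: step_poly_def pderiv_sum pderiv_add pderiv_diff poly_sum poly_pderiv2_monom_1
        del: pderiv_monom)
  also have "(\<Sum>l = 1..k. real (m - l) * (real (m - l) - 1) * p l)
      = (\<Sum>l = 1..k. (real m - real l) * (real m - real l - 1) * p l)"
    using sum_p_of_nat_diff[OF assms, of "\<lambda>t. t * (t - 1)"] by simp
  also have "(\<Sum>l = 1..k. (real m - real l) * (real m - real l - 1) * p l)
      + (\<Sum>l = 1..k. real (m + l) * (real (m + l) - 1) * q l) - real m * (real m - 1)
      = (\<Sum>l = 1..k. (real l)\<^sup>2 * (p l + q l)) + (1 - 2 * real m) * mu
        + real m * (real m - 1) * ((\<Sum>l = 1..k. p l + q l) - 1)"
    by (simp add: mu_def algebra_simps power2_eq_square sum.distrib sum_subtractf sum_distrib_left)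
  also have "\<dots> = (\<Sum>l = 1..k. (real l)\<^sup>2 * (p l + q l)) + (1 - 2 * real m) * mu"
    using sum_p_q by simp
  finally show ?thesis .
qed

lemma order_step_poly_1: "order 1 (step_poly kp 1) = (if mu = 0 then 2 else 1)"
proof -
  have order_Suc: "order 1 (step_poly kp 1) = Suc (order 1 (pderiv (step_poly kp 1)))"
    using order_pderiv[OF step_poly_nonzero poly_step_poly_1] by simp
  show ?thesis
  proof (cases "mu = 0")
    case False
    then have "order 1 (pderiv (step_poly kp 1)) = 0"
      by (intro order_0I) (simp add: poly_pderiv_step_poly_1)
    then show ?thesis using order_Suc False by simp
  next
    case True
    have "0 < (real kp)\<^sup>2 * (p kp + q kp)"
      using kp_mem p_kp_pos q_nonneg[OF kp_mem] by (intro mult_pos_pos add_pos_nonneg) auto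
    then have "0 < (\<Sum>l = 1..k. (real l)\<^sup>2 * (p l + q l))"
      using kp_mem p_nonneg q_nonneg by (intro sum_pos2[of _ kp]) auto
    moreover have "poly (pderiv (pderiv (step_poly kp 1))) 1
        = of_real (\<Sum>l = 1..k. (real l)\<^sup>2 * (p l + q l))"
      using poly_pderiv2_step_poly_1[of kp] True by simp
    ultimately have d2: "poly (pderiv (pderiv (step_poly kp 1))) 1 \<noteq> 0"
      by (simp only: of_real_eq_0_iff)
    then have "pderiv (step_poly kp 1) \<noteq> 0" by auto
    then have "order 1 (pderiv (step_poly kp 1)) = Suc (order 1 (pderiv (pderiv (step_poly kp 1))))"
      using order_pderiv poly_pderiv_step_poly_1[of kp] True by simp
    moreover have "order 1 (pderiv (pderiv (step_poly kp 1))) = 0" using d2 by (rule order_0I)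
    ultimately show ?thesis using order_Suc True by simp
  qed
qed

lemma step_poly_real_root_between:
  assumes "0 < a" "a < b" and "(step_gf a - c) * (step_gf b - c) < 0"
  obtains x where "a < x" "x < b" "poly (step_poly kp c) (of_real x) = 0"
proof -
  have cont: "\<forall>x. a \<le> x \<and> x \<le> b \<longrightarrow> isCont step_gf x"
    using assms(1) unfolding step_gf_real[abs_def] by (auto intro!: continuous_intros)
  have "\<exists>x. a \<le> x \<and> x \<le> b \<and> step_gf x = c"
  proof (cases "step_gf a < c")
    case True
    then have "c \<le> step_gf b" using assms(3) by (auto simp: mult_less_0_iff)
    then show ?thesis using IVT[of step_gf a c b] True assms(2) cont by auto
  next
    case False
    then have "step_gf b \<le> c" using assms(3) by (auto simp: mult_less_0_iff)
    then show ?thesis using IVT2[of step_gf b c a] False assms(2) cont by auto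
  qed
  then obtain x where x: "a \<le> x" "x \<le> b" "step_gf x = c" by blast
  moreover have "x \<noteq> a" "x \<noteq> b" using x(3) assms(3) by auto
  ultimately show ?thesis
    using that[of x] poly_step_poly_of_real[OF order_refl, of x c] assms(1) by simp
qed

lemma roots_in_step_poly_near_unit_circle:
  assumes gap: "\<And>z. poly (step_poly kp 1) z = 0 \<Longrightarrow> cmod z \<noteq> 1 \<Longrightarrow> \<delta> < \<bar>cmod z - 1\<bar>"
    and "0 < \<delta>" "\<delta> < 1"
  obtains \<epsilon> where "0 < \<epsilon>"
    and "\<And>c. \<bar>c - 1\<bar> < \<epsilon> \<Longrightarrow>
           roots_in (step_poly kp c) {z. cmod z < 1 - \<delta>} = roots_in (step_poly kp 1) {z. cmod z < 1}"
    and "\<And>c. \<bar>c - 1\<bar> < \<epsilon> \<Longrightarrow> roots_in (step_poly kp c) {z. cmod z < 1 + \<delta>}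
           = roots_in (step_poly kp 1) {z. cmod z < 1} + order 1 (step_poly kp 1)"
proof -
  have "poly (step_poly kp 1) z \<noteq> 0" if "cmod z = 1 - \<delta>" for z
    using gap[of z] that assms(2) by force
  then obtain \<epsilon>\<^sub>1 where "0 < \<epsilon>\<^sub>1" and stable_in: "\<And>c. \<bar>c - 1\<bar> < \<epsilon>\<^sub>1 \<Longrightarrow>
      roots_in (step_poly kp c) {z. cmod z < 1 - \<delta>} = roots_in (step_poly kp 1) {z. cmod z < 1 - \<delta>}"
    using roots_in_step_poly_stable[of "1 - \<delta>"] assms(3) by auto
  have "poly (step_poly kp 1) z \<noteq> 0" if "cmod z = 1 + \<delta>" for z
    using gap[of z] that assms(2) by force
  then obtain \<epsilon>\<^sub>2 where "0 < \<epsilon>\<^sub>2" and stable_out: "\<And>c. \<bar>c - 1\<bar> < \<epsilon>\<^sub>2 \<Longrightarrow>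
      roots_in (step_poly kp c) {z. cmod z < 1 + \<delta>} = roots_in (step_poly kp 1) {z. cmod z < 1 + \<delta>}"
    using roots_in_step_poly_stable[of "1 + \<delta>"] assms(2) by auto
  show ?thesis
  proof (rule that[of "min \<epsilon>\<^sub>1 \<epsilon>\<^sub>2"])
    show "0 < min \<epsilon>\<^sub>1 \<epsilon>\<^sub>2" using \<open>0 < \<epsilon>\<^sub>1\<close> \<open>0 < \<epsilon>\<^sub>2\<close> by simp
  next
    fix c assume "\<bar>c - 1\<bar> < min \<epsilon>\<^sub>1 \<epsilon>\<^sub>2"
    then show "roots_in (step_poly kp c) {z. cmod z < 1 - \<delta>} = roots_in (step_poly kp 1) {z. cmod z < 1}"
      and "roots_in (step_poly kp c) {z. cmod z < 1 + \<delta>}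
             = roots_in (step_poly kp 1) {z. cmod z < 1} + order 1 (step_poly kp 1)"
      using stable_in stable_out roots_in_disc_below_gap[OF gap assms(2) order_refl]
        roots_in_disc_above_gap[OF step_poly_nonzero gap assms(2) order_refl] roots_in_step_poly_circle
      by simp_all
  qed
qed

lemma roots_in_unit_disc_mu_zero:
  assumes "mu = 0"
  shows "roots_in (step_poly kp 1) {z. cmod z < 1} + 1 = kp"
proof -
  obtain \<delta> where \<delta>: "0 < \<delta>" "\<delta> < 1"
    and gap: "\<And>z. poly (step_poly kp 1) z = 0 \<Longrightarrow> cmod z \<noteq> 1 \<Longrightarrow> \<delta> < \<bar>cmod z - 1\<bar>"
    using unit_circle_root_gap[OF step_poly_nonzero] by blast
  then obtain \<epsilon> where "0 < \<epsilon>"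
    and inner: "\<And>c. \<bar>c - 1\<bar> < \<epsilon> \<Longrightarrow>
      roots_in (step_poly kp c) {z. cmod z < 1 - \<delta>} = roots_in (step_poly kp 1) {z. cmod z < 1}"
    and outer: "\<And>c. \<bar>c - 1\<bar> < \<epsilon> \<Longrightarrow>
      roots_in (step_poly kp c) {z. cmod z < 1 + \<delta>} = roots_in (step_poly kp 1) {z. cmod z < 1} + 2"
    using roots_in_step_poly_near_unit_circle[OF gap] order_step_poly_1 assms by auto
  have "1 < step_gf (1 - \<delta>)" "1 < step_gf (1 + \<delta>)"
    using step_gf_above_tangent[of "1 - \<delta>"] step_gf_above_tangent[of "1 + \<delta>"] \<delta> assms by auto
  moreover define m where "m = min \<epsilon> (min (step_gf (1 - \<delta>) - 1) (step_gf (1 + \<delta>) - 1))"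
  ultimately have "0 < m" "m \<le> \<epsilon>" "m \<le> step_gf (1 - \<delta>) - 1" "m \<le> step_gf (1 + \<delta>) - 1"
    using \<open>0 < \<epsilon>\<close> by auto
  then obtain c where c: "1 < c" "\<bar>c - 1\<bar> < \<epsilon>" "c < step_gf (1 - \<delta>)" "c < step_gf (1 + \<delta>)"
    by (intro that[of "1 + m / 2"]) auto
  obtain x\<^sub>1 where x\<^sub>1: "1 - \<delta> < x\<^sub>1" "x\<^sub>1 < 1" "poly (step_poly kp c) (of_real x\<^sub>1) = 0"
    using step_poly_real_root_between[of "1 - \<delta>" 1 c] \<delta> c by (auto simp: mult_less_0_iff)
  obtain x\<^sub>2 where x\<^sub>2: "1 < x\<^sub>2" "x\<^sub>2 < 1 + \<delta>" "poly (step_poly kp c) (of_real x\<^sub>2) = 0"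
    using step_poly_real_root_between[of 1 "1 + \<delta>" c] \<delta> c by (auto simp: mult_less_0_iff)
  have "roots_in (step_poly kp c) {z. cmod z < 1 - \<delta>} < roots_in (step_poly kp c) {z. cmod z < 1}"
    using x\<^sub>1 \<delta> by (intro roots_in_less_insert_root[OF step_poly_nonzero x\<^sub>1(3)]) auto
  moreover have "roots_in (step_poly kp c) {z. cmod z < 1} < roots_in (step_poly kp c) {z. cmod z < 1 + \<delta>}"
    using x\<^sub>2 \<delta> by (intro roots_in_less_insert_root[OF step_poly_nonzero x\<^sub>2(3)]) auto
  moreover have "roots_in (step_poly kp c) {z. cmod z < 1} = kp"
    using roots_in_step_poly_disc[of 1 c] c(1) by simp
  ultimately show ?thesis using inner[OF c(2)] outer[OF c(2)] by simp
qed

lemma roots_in_step_poly_unit_disc: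
  "roots_in (step_poly kp 1) {z. cmod z < 1} = kp - (if mu \<ge> 0 then 1 else 0)"
proof -
  obtain \<delta> where \<delta>: "0 < \<delta>" "\<delta> < 1"
    and gap: "\<And>z. poly (step_poly kp 1) z = 0 \<Longrightarrow> cmod z \<noteq> 1 \<Longrightarrow> \<delta> < \<bar>cmod z - 1\<bar>"
    using unit_circle_root_gap[OF step_poly_nonzero] by blast
  consider "mu < 0" | "mu > 0" | "mu = 0" by linarith
  then show ?thesis
  proof cases
    case 1
    then obtain d where "0 < d"
      and below: "\<And>h. 0 < h \<Longrightarrow> h < d \<Longrightarrow> step_gf (1 - h) < step_gf (1 :: real)"
      using DERIV_pos_inc_left[OF step_gf_has_derivative_1] by auto
    define h where "h = min \<delta> d / 2"
    have h: "0 < h" "h < d" "h \<le> \<delta>" using \<open>0 < d\<close> \<delta> by (auto simp: h_def)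
    have "roots_in (step_poly kp 1) {z. cmod z < 1 - h} = kp"
      using h \<delta> below[of h] by (intro roots_in_step_poly_disc) auto
    then show ?thesis using roots_in_disc_below_gap[OF gap h(1,3)] 1 by simp
  next
    case 2
    then obtain d where "0 < d"
      and above: "\<And>h. 0 < h \<Longrightarrow> h < d \<Longrightarrow> step_gf (1 + h) < step_gf (1 :: real)"
      using DERIV_neg_dec_right[OF step_gf_has_derivative_1] by auto
    define h where "h = min \<delta> d / 2"
    have h: "0 < h" "h < d" "h \<le> \<delta>" using \<open>0 < d\<close> \<delta> by (auto simp: h_def)
    have "roots_in (step_poly kp 1) {z. cmod z < 1 + h} = kp"
      using h above[of h] by (intro roots_in_step_poly_disc) auto
    then show ?thesis
      using roots_in_disc_above_gap[OF step_poly_nonzero gap h(1,3)] roots_in_step_poly_circle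
        order_step_poly_1 2
      by simp
  next
    case 3
    then show ?thesis using roots_in_unit_disc_mu_zero by simp
  qed
qed

lemma roots_in_step_poly_partition:
  "roots_in (step_poly kp 1) {z. cmod z < 1} + roots_in (step_poly kp 1) {z. cmod z = 1}
     + roots_in (step_poly kp 1) {z. cmod z > 1} = kp + kq"
proof -
  have "roots_in (step_poly kp 1) UNIV
      = roots_in (step_poly kp 1) (({z. cmod z < 1} \<union> {z. cmod z = 1}) \<union> {z. cmod z > 1})"
    by (rule arg_cong[where f = "roots_in (step_poly kp 1)"]) auto
  also have "\<dots> = roots_in (step_poly kp 1) {z. cmod z < 1}
      + roots_in (step_poly kp 1) {z. cmod z = 1} + roots_in (step_poly kp 1) {z. cmod z > 1}"
    using roots_in_Un[OF step_poly_nonzero, of "{z. cmod z < 1} \<union> {z. cmod z = 1}" "{z. cmod z > 1}"]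
      roots_in_Un[OF step_poly_nonzero, of "{z. cmod z < 1}" "{z. cmod z = 1}"]
    by fastforce
  finally show ?thesis by (simp add: roots_in_UNIV[OF step_poly_nonzero] degree_step_poly)
qed

section \<open>The reverse characteristic polynomial\<close>

lemma rc_gamma_diff:
  "(if n = 0 then 0 else rc_gamma k p q (n - 1)) - rc_gamma k p q n
     = (if n < k then p (k - n) else if n = k then - 1 else if n \<le> 2 * k then q (n - k) else 0)"
proof -
  consider "n = 0" | "0 < n" "n < k" | "n = k" | "k < n" "n \<le> 2 * k" | "2 * k < n" by linarith
  then show ?thesis
  proof cases
    case 1
    then show ?thesis using k_ge_1 by (simp add: rc_gamma_def)
  next
    case 2
    then have "(\<Sum>l = k - n..k. p l) = p (k - n) + (\<Sum>l = k - (n - 1)..k. p l)"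
      by (simp add: sum.atLeast_Suc_atMost Suc_diff_le)
    then show ?thesis using 2 by (simp add: rc_gamma_def)
  next
    case 3
    then show ?thesis using k_ge_1 sum_p_q by (simp add: rc_gamma_def sum.distrib)
  next
    case 4
    then have "(\<Sum>l = n - k..k. q l) = q (n - k) + (\<Sum>l = n - k + 1..k. q l)"
      by (simp add: sum.atLeast_Suc_atMost)
    then show ?thesis using 4 by (auto simp: rc_gamma_def Suc_diff_Suc)
  next
    case 5
    then show ?thesis unfolding rc_gamma_def by auto
  qed
qed

lemma coeff_step_poly_k:
  "coeff (step_poly k 1) n
     = of_real (if n < k then p (k - n) else if n = k then - 1 else if n \<le> 2 * k then q (n - k) else 0)"
proof -
  have "(\<Sum>l = 1..k. coeff (monom (of_real (p l) :: complex) (k - l)) n)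
      = (\<Sum>l = 1..k. if l = k - n then (if n < k then of_real (p l) else 0) else 0)"
    by (intro sum.cong) (auto simp: coeff_monom)
  also have "\<dots> = (if n < k then of_real (p (k - n)) else 0)" by auto
  finally have p_part: "(\<Sum>l = 1..k. coeff (monom (of_real (p l) :: complex) (k - l)) n)
      = (if n < k then of_real (p (k - n)) else 0)" .
  have "(\<Sum>l = 1..k. coeff (monom (of_real (q l) :: complex) (k + l)) n)
      = (\<Sum>l = 1..k. if l = n - k then (if k < n then of_real (q l) else 0) else 0)"
    by (intro sum.cong) (auto simp: coeff_monom)
  also have "\<dots> = (if k < n \<and> n \<le> 2 * k then of_real (q (n - k)) else 0)" by auto
  finally have q_part: "(\<Sum>l = 1..k. coeff (monom (of_real (q l) :: complex) (k + l)) n)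
      = (if k < n \<and> n \<le> 2 * k then of_real (q (n - k)) else 0)" .
  show ?thesis
    unfolding step_poly_def coeff_diff coeff_add coeff_sum p_part q_part by simp
qed

lemma linear_times_rc_psi: "[:-1, 1:] * rc_psi k p q = step_poly k 1"
proof (rule poly_eqI)
  fix n
  have "coeff ([:-1, 1:] * rc_psi k p q) n
      = (if n = 0 then 0 else coeff (rc_psi k p q) (n - 1)) - coeff (rc_psi k p q) n"
    by (simp add: mult_pCons_left coeff_pCons split: nat.split)
  also have "\<dots> = of_real ((if n = 0 then 0 else rc_gamma k p q (n - 1)) - rc_gamma k p q n)"
    by (simp add: coeff_rc_psi)
  also have "\<dots> = coeff (step_poly k 1) n"
    by (simp only: rc_gamma_diff coeff_step_poly_k)
  finally show "coeff ([:-1, 1:] * rc_psi k p q) n = coeff (step_poly k 1) n" .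
qed

lemma step_poly_k: "step_poly k 1 = monom 1 (k - kp) * step_poly kp 1"
proof (rule poly_eqI_nonzero)
  fix z :: complex assume "z \<noteq> 0"
  have "z ^ k = z ^ (k - kp) * z ^ kp" using kp_mem by (simp flip: power_add)
  then show "poly (step_poly k 1) z = poly (monom 1 (k - kp) * step_poly kp 1) z"
    using \<open>z \<noteq> 0\<close> kp_mem by (simp add: poly_step_poly poly_monom)
qed

lemma rc_psi_nonzero: "rc_psi k p q \<noteq> 0"
proof
  assume "rc_psi k p q = 0"
  then have "monom 1 (k - kp) * step_poly kp 1 = 0"
    using linear_times_rc_psi step_poly_k by simp
  then show False using step_poly_nonzero by simp
qed

lemma order_rc_psi:
  assumes "z \<noteq> 0"
  shows "order z (rc_psi k p q) + (if z = 1 then 1 else 0) = order z (step_poly kp 1)"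
proof -
  have eq: "[:-1, 1:] * rc_psi k p q = monom 1 (k - kp) * step_poly kp 1"
    using linear_times_rc_psi step_poly_k by simp
  have nz: "monom 1 (k - kp) * step_poly kp 1 \<noteq> 0" using step_poly_nonzero by simp
  have "order z [:-1, 1:] + order z (rc_psi k p q) = order z ([:-1, 1:] * rc_psi k p q)"
    by (rule order_mult[symmetric]) (unfold eq, rule nz)
  also have "\<dots> = order z (monom 1 (k - kp)) + order z (step_poly kp 1)"
    unfolding eq by (rule order_mult[OF nz])
  finally have "order z [:-1, 1:] + order z (rc_psi k p q)
      = order z (monom 1 (k - kp)) + order z (step_poly kp 1)" .
  moreover have "order z (monom 1 (k - kp)) = 0" using assms by (intro order_0I) (simp add: poly_monom)
  moreover have "order z [:-1, 1:] = (if z = 1 then 1 else 0)"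
    using order_power_n_n[of 1 1] by (auto intro: order_0I)
  ultimately show ?thesis by simp
qed

lemma order_rc_psi_eq:
  "z \<noteq> 0 \<Longrightarrow> z \<noteq> 1 \<Longrightarrow> order z (rc_psi k p q) = order z (step_poly kp 1)"
  using order_rc_psi[of z] by simp

lemma roots_in_rc_psi_inside:
  "roots_in (rc_psi k p q) {z. z \<noteq> 0 \<and> cmod z < 1} = roots_in (step_poly kp 1) {z. cmod z < 1}"
proof -
  have "roots_in (rc_psi k p q) {z. z \<noteq> 0 \<and> cmod z < 1}
      = roots_in (step_poly kp 1) {z. z \<noteq> 0 \<and> cmod z < 1}"
    by (intro roots_in_cong_order[OF rc_psi_nonzero step_poly_nonzero] order_rc_psi_eq) auto
  also have "\<dots> = roots_in (step_poly kp 1) {z. cmod z < 1}"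
    using poly_step_poly_0[of 1] p_kp_pos by (intro roots_in_cong) auto
  finally show ?thesis .
qed

lemma roots_in_rc_psi_outside:
  "roots_in (rc_psi k p q) {z. cmod z > 1} = roots_in (step_poly kp 1) {z. cmod z > 1}"
  by (intro roots_in_cong_order[OF rc_psi_nonzero step_poly_nonzero] order_rc_psi_eq) auto

lemma roots_in_rc_psi_circle:
  "roots_in (rc_psi k p q) {z. cmod z = 1} = order 1 (step_poly kp 1) - 1"
proof -
  have "z = 1" if "poly (rc_psi k p q) z = 0" "cmod z = 1" for z
  proof (rule ccontr)
    assume "z \<noteq> 1"
    moreover have "z \<noteq> 0" using that(2) by auto
    ultimately have "order z (step_poly kp 1) \<noteq> 0"
      using order_rc_psi_eq[of z] that(1) rc_psi_nonzero by (simp add: order_root)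
    then have "poly (step_poly kp 1) z = 0" by (simp add: order_root)
    then show False using step_poly_root_unimodular that(2) \<open>z \<noteq> 1\<close> by blast
  qed
  then have "roots_in (rc_psi k p q) {z. cmod z = 1} = roots_in (rc_psi k p q) {1}"
    by (intro roots_in_cong) auto
  also have "\<dots> = order 1 (step_poly kp 1) - 1"
    using order_rc_psi[of 1] by (simp add: roots_in_singleton)
  finally show ?thesis .
qed

theorem rc_psi_root_counts:
  "roots_in (rc_psi k p q) {z. z \<noteq> 0 \<and> cmod z < 1} = kp - (if mu \<ge> 0 then 1 else 0) \<and>
   roots_in (rc_psi k p q) {z. cmod z > 1} = kq - (if mu \<le> 0 then 1 else 0) \<and>
   roots_in (rc_psi k p q) {z. cmod z = 1} = (if mu = 0 then 1 else 0)"
proof -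
  have "roots_in (step_poly kp 1) {z. cmod z = 1} = (if mu = 0 then 2 else 1)"
    using roots_in_step_poly_circle order_step_poly_1 by simp
  moreover have "1 \<le> kp" "1 \<le> kq" using kp_mem kq_mem by auto
  ultimately show ?thesis
    using roots_in_rc_psi_inside roots_in_rc_psi_outside roots_in_rc_psi_circle order_step_poly_1
      roots_in_step_poly_partition roots_in_step_poly_unit_disc
    by (cases "mu < 0"; cases "mu = 0") auto
qed

end

theorem mainTheorem6:
  fixes k :: nat and p q :: "nat \<Rightarrow> real"
  assumes "k \<ge> 1"
    and "\<And>j. j \<in> {1..k} \<Longrightarrow> p j \<ge> 0"
    and "\<And>j. j \<in> {1..k} \<Longrightarrow> q j \<ge> 0"
    and "(\<Sum>j = 1..k. p j + q j) = 1"
    and "(\<Sum>j = 1..k. p j) > 0"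
    and "(\<Sum>j = 1..k. q j) > 0"
    and "Gcd {j \<in> {1..k}. p j + q j > 0} = 1"
  defines "kp \<equiv> Max {j \<in> {1..k}. p j > 0}"
    and "kq \<equiv> Max {j \<in> {1..k}. q j > 0}"
    and "\<mu> \<equiv> (\<Sum>j = 1..k. real j * (p j - q j))"
  shows "roots_in (rc_psi k p q) {z. z \<noteq> 0 \<and> cmod z < 1} = kp - (if \<mu> \<ge> 0 then 1 else 0) \<and>
         roots_in (rc_psi k p q) {z. cmod z > 1} = kq - (if \<mu> \<le> 0 then 1 else 0) \<and>
         roots_in (rc_psi k p q) {z. cmod z = 1} = (if \<mu> = 0 then 1 else 0)"
proof -
  have walk: "bounded_jump_walk k p q"
    by unfold_locales (use assms(1-7) in auto)
  show ?thesis
    using bounded_jump_walk.rc_psi_root_counts[OF walk]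
    unfolding kp_def kq_def \<mu>_def bounded_jump_walk.kp_def[OF walk]
      bounded_jump_walk.kq_def[OF walk] bounded_jump_walk.mu_def[OF walk] .
qed

end
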